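(* Let $\mathcal{A}$ be a $\tau^*_{\mathrm{tup}}$-structure which is a model of $T_{\mathrm{tup}}$ whose $M$-sort is $\mathcal{M}$, and identify $\mathcal{M}^{<\mathbb{N}}$ with its image under the unique embedding into $\mathcal{A}$ that is the identity on the $M$-sort (so that $\mathcal{M}^{<\mathbb{N}}$ is expanded by the restrictions $R\restriction_{\mathbb{N}}$ and $g\restriction_{\mathbb{N}\times M^{<\mathbb{N}}}$ of the interpretations in $\mathcal{A}$). Let $\varphi$ be a $\Pi_1$ formula of $\tau^*_{\mathrm{tup}}$ and $\bar a$ a tuple from $\mathcal{M}^{<\mathbb{N}}$. If $\mathcal{A}\models\varphi(\bar a)$, then $(\mathcal{M}^{<\mathbb{N}},R\restriction_{\mathbb{N}},g\restriction_{\mathbb{N}\times M^{<\mathbb{N}}})\models\varphi(\bar a)$.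
   Context: Fix a countable language $\tau$. $\tau_{\mathrm{tup}}$ is the three-sorted language with sorts $M$ (carrying $\tau$), $N$ (carrying the language of arithmetic), and $M_{\mathrm{tup}}$, with a length function $|\cdot|:M_{\mathrm{tup}}\to N$ and a relation $\mathrm{ind}\subseteq M_{\mathrm{tup}}\times N\times M$ ("the $i$-th entry of $\pi$ is $m$"). $\tau^*_{\mathrm{tup}}=\tau_{\mathrm{tup}}\cup\{R,g\}$, $R$ a unary relation on $N$, $g:N\times M_{\mathrm{tup}}\to M$. $T_{\mathrm{tup}}$ says: the $N$-sort satisfies $PA^-$ (Peano arithmetic without induction); entries are indexed only below the length, are unique, and exist below the length; tuples with the same length and same entries are equal; an empty tuple exists; every tuple can be extended by any element of $M$ at position $|\pi|$ keeping earlier entries; and every tuple of length $\ge1$ has a truncation of length $|\pi|-1$ with the same earlier entries. $\mathcal{M}^{<\mathbb{N}}=(\mathcal{M},\mathbb{N},M^{<\mathbb{N}})$ is the standard $\tau_{\mathrm{tup}}$-structure of finite tuples from $M$. The $\Pi_1$ $\tau^*_{\mathrm{tup}}$-formulas are defined inductively: finitary quantifier-free formulas; $(\exists x\in M)\varphi$ and $(\forall x\in M)\varphi$ for $\Pi_1$ $\varphi$; $(\forall x\in N)\varphi$ and $(\forall\pi\in M_{\mathrm{tup}})\varphi$ for $\Pi_1$ $\varphi$; and $(\exists x\in N, x<t)\varphi$ and $(\exists\pi\in M_{\mathrm{tup}}, |\pi|<t)\varphi$ for $\Pi_1$ $\varphi$ and a term $t$. *)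

theory Defs
  imports "HOL-Library.Countable"
begin

text \<open>The M-sort carries a tau-structure given by interpretations of function symbols
 (type 'f) and relation symbols (type 'r) acting on argument lists; arities are given
 separately and respected by well-formed formulas.\<close>

record ('m, 'n, 't, 'f, 'r) tstruct =
  Mfun  :: "'f \<Rightarrow> 'm list \<Rightarrow> 'm"
  Mrel  :: "'r \<Rightarrow> 'm list \<Rightarrow> bool"
  Nzero :: 'n
  None' :: 'n
  Nplus :: "'n \<Rightarrow> 'n \<Rightarrow> 'n"
  Ntimes :: "'n \<Rightarrow> 'n \<Rightarrow> 'n"
  Nless :: "'n \<Rightarrow> 'n \<Rightarrow> bool"
  Tlen  :: "'t \<Rightarrow> 'n"
  Tind  :: "'t \<Rightarrow> 'n \<Rightarrow> 'm \<Rightarrow> bool"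
  Rrel  :: "'n \<Rightarrow> bool"
  Gfun  :: "'n \<Rightarrow> 't \<Rightarrow> 'm"

text \<open>Variables of each sort are indexed by natural numbers.  Tuple-sorted terms are
 just tuple variables (the language has no function symbols into M_tup).\<close>

datatype nterm =
    NVar nat | NZero | NOne | NPlus nterm nterm | NTimes nterm nterm
  | NLen nat

datatype 'f mterm =
    MVar nat | MFun 'f "'f mterm list"
  | MG nterm nat

datatype ('f, 'r) form =
    FFalse
  | MEq "'f mterm" "'f mterm"
  | NEq nterm nterm
  | TEq nat nat
  | NLessF nterm nterm
  | RelF 'r "'f mterm list"
  | IndF nat nterm "'f mterm"
  | RF nterm
  | Neg "('f, 'r) form"
  | Conj "('f, 'r) form" "('f, 'r) form"
  | Disj "('f, 'r) form" "('f, 'r) form"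
  | ExM nat "('f, 'r) form"
  | AllM nat "('f, 'r) form"
  | ExN nat "('f, 'r) form"
  | AllN nat "('f, 'r) form"
  | ExT nat "('f, 'r) form"
  | AllT nat "('f, 'r) form"
  | ExNB nat nterm "('f, 'r) form"
  | ExTB nat nterm "('f, 'r) form"

fun wf_mterm :: "('f \<Rightarrow> nat) \<Rightarrow> 'f mterm \<Rightarrow> bool" where
  "wf_mterm fa (MVar x) = True"
| "wf_mterm fa (MFun f ts) = (length ts = fa f \<and> (\<forall>t\<in>set ts. wf_mterm fa t))"
| "wf_mterm fa (MG t p) = True"

fun wf_form :: "('f \<Rightarrow> nat) \<Rightarrow> ('r \<Rightarrow> nat) \<Rightarrow> ('f, 'r) form \<Rightarrow> bool" where
  "wf_form fa ra FFalse = True"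
| "wf_form fa ra (MEq s t) = (wf_mterm fa s \<and> wf_mterm fa t)"
| "wf_form fa ra (NEq s t) = True"
| "wf_form fa ra (TEq p q) = True"
| "wf_form fa ra (NLessF s t) = True"
| "wf_form fa ra (RelF r ts) = (length ts = ra r \<and> (\<forall>t\<in>set ts. wf_mterm fa t))"
| "wf_form fa ra (IndF p s t) = wf_mterm fa t"
| "wf_form fa ra (RF s) = True"
| "wf_form fa ra (Neg \<phi>) = wf_form fa ra \<phi>"
| "wf_form fa ra (Conj \<phi> \<psi>) = (wf_form fa ra \<phi> \<and> wf_form fa ra \<psi>)"
| "wf_form fa ra (Disj \<phi> \<psi>) = (wf_form fa ra \<phi> \<and> wf_form fa ra \<psi>)"
| "wf_form fa ra (ExM x \<phi>) = wf_form fa ra \<phi>"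
| "wf_form fa ra (AllM x \<phi>) = wf_form fa ra \<phi>"
| "wf_form fa ra (ExN x \<phi>) = wf_form fa ra \<phi>"
| "wf_form fa ra (AllN x \<phi>) = wf_form fa ra \<phi>"
| "wf_form fa ra (ExT x \<phi>) = wf_form fa ra \<phi>"
| "wf_form fa ra (AllT x \<phi>) = wf_form fa ra \<phi>"
| "wf_form fa ra (ExNB x t \<phi>) = wf_form fa ra \<phi>"
| "wf_form fa ra (ExTB x t \<phi>) = wf_form fa ra \<phi>"

fun qf :: "('f, 'r) form \<Rightarrow> bool" where
  "qf (Neg \<phi>) = qf \<phi>"
| "qf (Conj \<phi> \<psi>) = (qf \<phi> \<and> qf \<psi>)"
| "qf (Disj \<phi> \<psi>) = (qf \<phi> \<and> qf \<psi>)"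
| "qf (ExM x \<phi>) = False"
| "qf (AllM x \<phi>) = False"
| "qf (ExN x \<phi>) = False"
| "qf (AllN x \<phi>) = False"
| "qf (ExT x \<phi>) = False"
| "qf (AllT x \<phi>) = False"
| "qf (ExNB x t \<phi>) = False"
| "qf (ExTB x t \<phi>) = False"
| "qf _ = True"

inductive Pi1 :: "('f, 'r) form \<Rightarrow> bool" where
  Pi1_qf: "qf \<phi> \<Longrightarrow> Pi1 \<phi>"
| Pi1_ExM: "Pi1 \<phi> \<Longrightarrow> Pi1 (ExM x \<phi>)"
| Pi1_AllM: "Pi1 \<phi> \<Longrightarrow> Pi1 (AllM x \<phi>)"
| Pi1_AllN: "Pi1 \<phi> \<Longrightarrow> Pi1 (AllN x \<phi>)"
| Pi1_AllT: "Pi1 \<phi> \<Longrightarrow> Pi1 (AllT x \<phi>)"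
| Pi1_ExNB: "Pi1 \<phi> \<Longrightarrow> Pi1 (ExNB x t \<phi>)"
| Pi1_ExTB: "Pi1 \<phi> \<Longrightarrow> Pi1 (ExTB x t \<phi>)"

fun eval_n :: "('m, 'n, 't, 'f, 'r) tstruct \<Rightarrow> (nat \<Rightarrow> 'n) \<Rightarrow> (nat \<Rightarrow> 't) \<Rightarrow> nterm \<Rightarrow> 'n" where
  "eval_n S vN vT (NVar x) = vN x"
| "eval_n S vN vT NZero = Nzero S"
| "eval_n S vN vT NOne = None' S"
| "eval_n S vN vT (NPlus s t) = Nplus S (eval_n S vN vT s) (eval_n S vN vT t)"
| "eval_n S vN vT (NTimes s t) = Ntimes S (eval_n S vN vT s) (eval_n S vN vT t)"
| "eval_n S vN vT (NLen p) = Tlen S (vT p)"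

fun eval_m :: "('m, 'n, 't, 'f, 'r) tstruct \<Rightarrow> (nat \<Rightarrow> 'm) \<Rightarrow> (nat \<Rightarrow> 'n) \<Rightarrow> (nat \<Rightarrow> 't)
    \<Rightarrow> 'f mterm \<Rightarrow> 'm" where
  "eval_m S vM vN vT (MVar x) = vM x"
| "eval_m S vM vN vT (MFun f ts) = Mfun S f (map (eval_m S vM vN vT) ts)"
| "eval_m S vM vN vT (MG t p) = Gfun S (eval_n S vN vT t) (vT p)"

fun sat :: "('m, 'n, 't, 'f, 'r) tstruct \<Rightarrow> (nat \<Rightarrow> 'm) \<Rightarrow> (nat \<Rightarrow> 'n) \<Rightarrow> (nat \<Rightarrow> 't)
    \<Rightarrow> ('f, 'r) form \<Rightarrow> bool" where
  "sat S vM vN vT FFalse = False"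
| "sat S vM vN vT (MEq s t) = (eval_m S vM vN vT s = eval_m S vM vN vT t)"
| "sat S vM vN vT (NEq s t) = (eval_n S vN vT s = eval_n S vN vT t)"
| "sat S vM vN vT (TEq p q) = (vT p = vT q)"
| "sat S vM vN vT (NLessF s t) = Nless S (eval_n S vN vT s) (eval_n S vN vT t)"
| "sat S vM vN vT (RelF r ts) = Mrel S r (map (eval_m S vM vN vT) ts)"
| "sat S vM vN vT (IndF p s t) = Tind S (vT p) (eval_n S vN vT s) (eval_m S vM vN vT t)"
| "sat S vM vN vT (RF s) = Rrel S (eval_n S vN vT s)"
| "sat S vM vN vT (Neg \<phi>) = (\<not> sat S vM vN vT \<phi>)"
| "sat S vM vN vT (Conj \<phi> \<psi>) = (sat S vM vN vT \<phi> \<and> sat S vM vN vT \<psi>)"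
| "sat S vM vN vT (Disj \<phi> \<psi>) = (sat S vM vN vT \<phi> \<or> sat S vM vN vT \<psi>)"
| "sat S vM vN vT (ExM x \<phi>) = (\<exists>a. sat S (vM(x := a)) vN vT \<phi>)"
| "sat S vM vN vT (AllM x \<phi>) = (\<forall>a. sat S (vM(x := a)) vN vT \<phi>)"
| "sat S vM vN vT (ExN x \<phi>) = (\<exists>a. sat S vM (vN(x := a)) vT \<phi>)"
| "sat S vM vN vT (AllN x \<phi>) = (\<forall>a. sat S vM (vN(x := a)) vT \<phi>)"
| "sat S vM vN vT (ExT x \<phi>) = (\<exists>a. sat S vM vN (vT(x := a)) \<phi>)"
| "sat S vM vN vT (AllT x \<phi>) = (\<forall>a. sat S vM vN (vT(x := a)) \<phi>)"
| "sat S vM vN vT (ExNB x t \<phi>) =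
     (\<exists>a. Nless S a (eval_n S vN vT t) \<and> sat S vM (vN(x := a)) vT \<phi>)"
| "sat S vM vN vT (ExTB x t \<phi>) =
     (\<exists>a. Nless S (Tlen S a) (eval_n S vN vT t) \<and> sat S vM vN (vT(x := a)) \<phi>)"

text \<open>PA^- (Kaye): the non-negative parts of discretely ordered commutative rings.\<close>
definition PA_minus :: "('m, 'n, 't, 'f, 'r) tstruct \<Rightarrow> bool" where
  "PA_minus S \<longleftrightarrow>
    (let z = Nzero S; u = None' S; p = Nplus S; m = Ntimes S; l = Nless S in
     (\<forall>x y w. p x (p y w) = p (p x y) w) \<and>
     (\<forall>x y. p x y = p y x) \<and>
     (\<forall>x y w. m x (m y w) = m (m x y) w) \<and>
     (\<forall>x y. m x y = m y x) \<and>
     (\<forall>x y w. m x (p y w) = p (m x y) (m x w)) \<and>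
     (\<forall>x. p x z = x \<and> m x z = z) \<and>
     (\<forall>x. m x u = x) \<and>
     (\<forall>x y w. l x y \<and> l y w \<longrightarrow> l x w) \<and>
     (\<forall>x. \<not> l x x) \<and>
     (\<forall>x y. l x y \<or> x = y \<or> l y x) \<and>
     (\<forall>x y w. l x y \<longrightarrow> l (p x w) (p y w)) \<and>
     (\<forall>x y w. l z w \<and> l x y \<longrightarrow> l (m x w) (m y w)) \<and>
     (\<forall>x y. l x y \<longrightarrow> (\<exists>w. p x w = y)) \<and>
     l z u \<and> (\<forall>x. l z x \<longrightarrow> (u = x \<or> l u x)) \<and>
     (\<forall>x. z = x \<or> l z x))"

definition T_tup :: "('m, 'n, 't, 'f, 'r) tstruct \<Rightarrow> bool" where
  "T_tup S \<longleftrightarrow> PA_minus S \<and>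
    \<comment> \<open>entries are indexed only below the length\<close>
    (\<forall>\<pi> i m. Tind S \<pi> i m \<longrightarrow> Nless S i (Tlen S \<pi>)) \<and>
    \<comment> \<open>entries are unique\<close>
    (\<forall>\<pi> i m m'. Tind S \<pi> i m \<and> Tind S \<pi> i m' \<longrightarrow> m = m') \<and>
    \<comment> \<open>entries exist below the length\<close>
    (\<forall>\<pi> i. Nless S i (Tlen S \<pi>) \<longrightarrow> (\<exists>m. Tind S \<pi> i m)) \<and>
    \<comment> \<open>extensionality\<close>
    (\<forall>\<pi> \<pi>'. Tlen S \<pi> = Tlen S \<pi>' \<and> (\<forall>i m. Tind S \<pi> i m \<longleftrightarrow> Tind S \<pi>' i m) \<longrightarrow> \<pi> = \<pi>') \<and>
    \<comment> \<open>an empty tuple exists\<close>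
    (\<exists>\<pi>. Tlen S \<pi> = Nzero S) \<and>
    \<comment> \<open>extension by any element at position |pi|\<close>
    (\<forall>\<pi> m. \<exists>\<pi>'. Tlen S \<pi>' = Nplus S (Tlen S \<pi>) (None' S) \<and> Tind S \<pi>' (Tlen S \<pi>) m \<and>
        (\<forall>i x. Nless S i (Tlen S \<pi>) \<longrightarrow> (Tind S \<pi>' i x \<longleftrightarrow> Tind S \<pi> i x))) \<and>
    \<comment> \<open>truncation of tuples of length at least 1\<close>
    (\<forall>\<pi>. Nless S (Nzero S) (Tlen S \<pi>) \<longrightarrow>
        (\<exists>\<pi>'. Nplus S (Tlen S \<pi>') (None' S) = Tlen S \<pi> \<and>
           (\<forall>i x. Nless S i (Tlen S \<pi>') \<longrightarrow> (Tind S \<pi>' i x \<longleftrightarrow> Tind S \<pi> i x))))"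

text \<open>An embedding of the standard tau_tup-structure M^{<N} (with the same M-sort) into S
 which is the identity on the M-sort.\<close>
definition is_std_emb :: "('m, 'n, 't, 'f, 'r) tstruct \<Rightarrow> (nat \<Rightarrow> 'n) \<Rightarrow> ('m list \<Rightarrow> 't) \<Rightarrow> bool" where
  "is_std_emb S eN eT \<longleftrightarrow> inj eN \<and> inj eT \<and>
    eN 0 = Nzero S \<and> eN 1 = None' S \<and>
    (\<forall>a b. eN (a + b) = Nplus S (eN a) (eN b)) \<and>
    (\<forall>a b. eN (a * b) = Ntimes S (eN a) (eN b)) \<and>
    (\<forall>a b. a < b \<longleftrightarrow> Nless S (eN a) (eN b)) \<and>
    (\<forall>\<pi>. Tlen S (eT \<pi>) = eN (length \<pi>)) \<and>
    (\<forall>\<pi> i m. Tind S (eT \<pi>) (eN i) m \<longleftrightarrow> (i < length \<pi> \<and> \<pi> ! i = m))"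

definition std_exp :: "('m, 'n, 't, 'f, 'r) tstruct \<Rightarrow> (nat \<Rightarrow> 'n) \<Rightarrow> ('m list \<Rightarrow> 't)
    \<Rightarrow> ('m, nat, 'm list, 'f, 'r) tstruct" where
  "std_exp S eN eT =
    \<lparr> Mfun = Mfun S, Mrel = Mrel S,
      Nzero = 0, None' = 1, Nplus = (+), Ntimes = (*), Nless = (<),
      Tlen = length, Tind = (\<lambda>\<pi> i m. i < length \<pi> \<and> \<pi> ! i = m),
      Rrel = (\<lambda>i. Rrel S (eN i)),
      Gfun = (\<lambda>i \<pi>. Gfun S (eN i) (eT \<pi>)) \<rparr>"

end

theory Submission
  imports Defs
begin

text \<open>Under the standard embedding, terms evaluate compatibly and quantifier-free formulas
 are absolute.  The universal quantifiers of a \<open>\<Pi>\<^sub>1\<close> formula pass downwards trivially,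
 and the unbounded quantifiers over \<open>M\<close> range over the same sort in both structures.
 The only real work is in the bounded existential quantifiers: a witness in \<open>\<A>\<close> lies
 below a standard number, and by the discreteness of \<open>PA\<^sup>-\<close> everything below a standard
 number is standard; a tuple of standard length is standard by extensionality, since all
 its entries sit at standard positions.\<close>

lemma PA_minusD:
  assumes "PA_minus S"
  shows PA_minus_less_trans: "\<And>x y w. Nless S x y \<Longrightarrow> Nless S y w \<Longrightarrow> Nless S x w"
    and PA_minus_less_irrefl: "\<And>x. \<not> Nless S x x"
    and PA_minus_less_linear: "\<And>x y. Nless S x y \<or> x = y \<or> Nless S y x"
    and PA_minus_add_strict_right_mono:
      "\<And>x y w. Nless S x y \<Longrightarrow> Nless S (Nplus S x w) (Nplus S y w)"
    and PA_minus_less_imp_add: "\<And>x y. Nless S x y \<Longrightarrow> \<exists>w. Nplus S x w = y"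
    and PA_minus_one_le_pos: "\<And>x. Nless S (Nzero S) x \<Longrightarrow> None' S = x \<or> Nless S (None' S) x"
    and PA_minus_zero_le: "\<And>x. Nzero S = x \<or> Nless S (Nzero S) x"
    and PA_minus_add_zero: "\<And>x. Nplus S x (Nzero S) = x"
    and PA_minus_add_commute: "\<And>x y. Nplus S x y = Nplus S y x"
  using assms unfolding PA_minus_def Let_def by meson+

lemma PA_minus_not_less_zero:
  assumes "PA_minus S"
  shows "\<not> Nless S x (Nzero S)"
  using PA_minus_zero_le[OF assms, of x] PA_minus_less_irrefl[OF assms]
    PA_minus_less_trans[OF assms] by blast

lemma PA_minus_less_succ:
  assumes P: "PA_minus S" and x: "Nless S x (Nplus S y (None' S))"
  shows "x = y \<or> Nless S x y"
proof (rule ccontr)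
  assume "\<not> (x = y \<or> Nless S x y)"
  then have "Nless S y x" using PA_minus_less_linear[OF P] by blast
  then obtain w where w: "Nplus S y w = x" using PA_minus_less_imp_add[OF P] by blast
  have "w \<noteq> Nzero S"
    using w \<open>Nless S y x\<close> PA_minus_add_zero[OF P] PA_minus_less_irrefl[OF P] by auto
  then have "None' S = w \<or> Nless S (None' S) w"
    using PA_minus_zero_le[OF P, of w] PA_minus_one_le_pos[OF P, of w] by blast
  then show False
  proof
    assume "None' S = w"
    then show False using w x PA_minus_less_irrefl[OF P] by auto
  next
    assume "Nless S (None' S) w"
    then have "Nless S (Nplus S y (None' S)) x"
      using w PA_minus_add_strict_right_mono[OF P] PA_minus_add_commute[OF P] by metis
    then show False using x PA_minus_less_trans[OF P] PA_minus_less_irrefl[OF P] by blast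
  qed
qed

lemma is_std_embD:
  assumes "is_std_emb A eN eT"
  shows "inj eN" "inj eT" "eN 0 = Nzero A" "eN (Suc n) = Nplus A (eN n) (None' A)"
    "Nless A (eN a) (eN b) \<longleftrightarrow> a < b"
    "Tlen A (eT \<pi>) = eN (length \<pi>)"
    "Tind A (eT \<pi>) (eN i) m \<longleftrightarrow> i < length \<pi> \<and> \<pi> ! i = m"
  using assms unfolding is_std_emb_def by (metis Suc_eq_plus1)+

lemma less_std_imp_std:
  assumes P: "PA_minus A" and E: "is_std_emb A eN eT"
  shows "Nless A x (eN n) \<Longrightarrow> \<exists>k<n. x = eN k"
proof (induction n)
  case 0
  then show ?case using PA_minus_not_less_zero[OF P] is_std_embD(3)[OF E] by simp
next
  case (Suc n)
  then have "x = eN n \<or> Nless A x (eN n)"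
    using PA_minus_less_succ[OF P] is_std_embD(4)[OF E] by simp
  then show ?case using Suc.IH less_SucI by blast
qed

lemma T_tupD:
  assumes "T_tup S"
  shows "PA_minus S"
    and T_tup_ind_less_len: "\<And>\<pi> i m. Tind S \<pi> i m \<Longrightarrow> Nless S i (Tlen S \<pi>)"
    and T_tup_ind_unique: "\<And>\<pi> i m m'. Tind S \<pi> i m \<Longrightarrow> Tind S \<pi> i m' \<Longrightarrow> m = m'"
    and T_tup_ind_exists: "\<And>\<pi> i. Nless S i (Tlen S \<pi>) \<Longrightarrow> \<exists>m. Tind S \<pi> i m"
    and T_tup_ext: "\<And>\<pi> \<pi>'. Tlen S \<pi> = Tlen S \<pi>' \<Longrightarrow>
      (\<And>i m. Tind S \<pi> i m \<longleftrightarrow> Tind S \<pi>' i m) \<Longrightarrow> \<pi> = \<pi>'"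
  using assms unfolding T_tup_def by meson+

lemma std_length_imp_std_tuple:
  assumes T: "T_tup A" and E: "is_std_emb A eN eT" and len: "Tlen A a = eN k"
  obtains p where "length p = k" "a = eT p"
proof -
  have ind_less_len: "Nless A i (eN k)" if "Tind A a i m" for i m
    using T_tup_ind_less_len[OF T that] len by simp
  have "\<forall>j<k. \<exists>m. Tind A a (eN j) m"
    using T_tup_ind_exists[OF T] len is_std_embD(5)[OF E] by metis
  then obtain p where p: "length p = k" "\<forall>j<k. Tind A a (eN j) (p ! j)"
    unfolding Skolem_list_nth by blast
  have "Tind A a i m \<longleftrightarrow> Tind A (eT p) i m" for i m
  proof -
    have "Tind A a i m \<or> Tind A (eT p) i m \<Longrightarrow> \<exists>j<k. i = eN j"
      using ind_less_len T_tup_ind_less_len[OF T] less_std_imp_std[OF T_tupD(1)[OF T] E]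
        is_std_embD(6)[OF E] p(1) by metis
    then show ?thesis
      using p T_tup_ind_unique[OF T] is_std_embD(7)[OF E] by metis
  qed
  then have "a = eT p"
    using T_tup_ext[OF T] len is_std_embD(6)[OF E] p(1) by simp
  with p(1) show thesis by (rule that)
qed

lemma std_exp_simps [simp]:
  "Mfun (std_exp A eN eT) = Mfun A" "Mrel (std_exp A eN eT) = Mrel A"
  "Nzero (std_exp A eN eT) = 0" "None' (std_exp A eN eT) = 1"
  "Nplus (std_exp A eN eT) = (+)" "Ntimes (std_exp A eN eT) = (*)"
  "Nless (std_exp A eN eT) = (<)" "Tlen (std_exp A eN eT) = length"
  "Tind (std_exp A eN eT) = (\<lambda>\<pi> i m. i < length \<pi> \<and> \<pi> ! i = m)"
  "Rrel (std_exp A eN eT) = (\<lambda>i. Rrel A (eN i))"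
  "Gfun (std_exp A eN eT) = (\<lambda>i \<pi>. Gfun A (eN i) (eT \<pi>))"
  by (simp_all add: std_exp_def)

lemma eval_n_std_emb:
  assumes "is_std_emb A eN eT"
  shows "eval_n A (eN \<circ> vN) (eT \<circ> vT) t = eN (eval_n (std_exp A eN eT) vN vT t)"
  using assms by (induction t) (auto simp: is_std_emb_def)

lemma eval_m_std_emb:
  assumes "is_std_emb A eN eT"
  shows "eval_m A vM (eN \<circ> vN) (eT \<circ> vT) t = eval_m (std_exp A eN eT) vM vN vT t"
  \<comment> \<open>\<open>comp_apply\<close> eta-expands \<open>eN \<circ> vN\<close> before the rewrite could fire\<close>
  by (induction t) (simp_all add: eval_n_std_emb[OF assms, unfolded comp_def] cong: map_cong)

lemma qf_sat_std_emb_iff: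
  assumes E: "is_std_emb A eN eT" and "qf \<phi>"
  shows "sat A vM (eN \<circ> vN) (eT \<circ> vT) \<phi> \<longleftrightarrow> sat (std_exp A eN eT) vM vN vT \<phi>"
  using assms(2)
  by (induction \<phi>)
    (simp_all add: eval_n_std_emb[OF E] eval_m_std_emb[OF E] is_std_embD[OF E] inj_eq
      cong: map_cong)

lemma Pi1_sat_std_emb:
  assumes T: "T_tup A" and E: "is_std_emb A eN eT"
  shows "Pi1 \<phi> \<Longrightarrow> sat A vM (eN \<circ> vN) (eT \<circ> vT) \<phi> \<Longrightarrow> sat (std_exp A eN eT) vM vN vT \<phi>"
proof (induction \<phi> arbitrary: vM vN vT rule: Pi1.induct)
  case (Pi1_qf \<phi>)
  then show ?case using qf_sat_std_emb_iff[OF E] by blast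
next
  case (Pi1_AllN \<phi> x)
  have "sat A vM (eN \<circ> vN(x := k)) (eT \<circ> vT) \<phi>" for k
    using Pi1_AllN.prems unfolding fun_upd_comp sat.simps by blast
  then show ?case unfolding sat.simps using Pi1_AllN.IH by blast
next
  case (Pi1_AllT \<phi> x)
  have "sat A vM (eN \<circ> vN) (eT \<circ> vT(x := p)) \<phi>" for p
    using Pi1_AllT.prems unfolding fun_upd_comp sat.simps by blast
  then show ?case unfolding sat.simps using Pi1_AllT.IH by blast
next
  case (Pi1_ExNB \<phi> x t)
  then obtain a where a: "Nless A a (eN (eval_n (std_exp A eN eT) vN vT t))"
    "sat A vM ((eN \<circ> vN)(x := a)) (eT \<circ> vT) \<phi>"
    unfolding sat.simps eval_n_std_emb[OF E] by blast
  then obtain k where k: "k < eval_n (std_exp A eN eT) vN vT t" "a = eN k"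
    using less_std_imp_std[OF T_tupD(1)[OF T] E] by blast
  have "sat (std_exp A eN eT) vM (vN(x := k)) vT \<phi>"
    using a(2) unfolding k(2) fun_upd_comp[symmetric] by (rule Pi1_ExNB.IH)
  with k(1) show ?case by auto
next
  case (Pi1_ExTB \<phi> x t)
  then obtain a where a: "Nless A (Tlen A a) (eN (eval_n (std_exp A eN eT) vN vT t))"
    "sat A vM (eN \<circ> vN) ((eT \<circ> vT)(x := a)) \<phi>"
    unfolding sat.simps eval_n_std_emb[OF E] by blast
  then obtain k where k: "k < eval_n (std_exp A eN eT) vN vT t" "Tlen A a = eN k"
    using less_std_imp_std[OF T_tupD(1)[OF T] E] by blast
  then obtain p where p: "length p = k" "a = eT p"
    using std_length_imp_std_tuple[OF T E] by blast
  have "sat (std_exp A eN eT) vM vN (vT(x := p)) \<phi>"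
    using a(2) unfolding p(2) fun_upd_comp[symmetric] by (rule Pi1_ExTB.IH)
  with k(1) p(1) show ?case by auto
qed auto

theorem lemma5p7:
  fixes A :: "('m, 'n, 't, 'f :: countable, 'r :: countable) tstruct"
    and fa :: "'f \<Rightarrow> nat" and ra :: "'r \<Rightarrow> nat"
    and eN :: "nat \<Rightarrow> 'n" and eT :: "'m list \<Rightarrow> 't"
    and \<phi> :: "('f, 'r) form"
    and vM :: "nat \<Rightarrow> 'm" and vN :: "nat \<Rightarrow> nat" and vT :: "nat \<Rightarrow> 'm list"
  assumes "T_tup A"
    and "is_std_emb A eN eT"
    and "wf_form fa ra \<phi>"
    and "Pi1 \<phi>"
    and "sat A vM (eN \<circ> vN) (eT \<circ> vT) \<phi>"
  shows "sat (std_exp A eN eT) vM vN vT \<phi>"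
  using Pi1_sat_std_emb[OF assms(1,2,4,5)] .

end
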